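(* Let $f:\mathbb{R}^n\to\mathbb{R}$ be subdifferentiable with subgradient Lipschitz continuous with constant $L>0$ (i.e. $\|g_x-g_y\|\le L\|x-y\|$ for all $x,y$, $g_x\in\partial f(x)$, $g_y\in\partial f(y)$). Let $x_0\in\mathbb{R}^n$ and suppose $\Omega=\{x: f(x)\le f(x_0)\}$ is compact and $f(x)\ge C$ on $\Omega$ for some constant $C$. Let $M\ge0$ be an integer, $0<\gamma<1$, and $(\eta_k)$ positive with $\sum_k\eta_k<\infty$. Let $x_{k+1}=x_k+\alpha_kd_k$, where $g_k\in\partial f(x_k)$, $d_k$ is a search direction, and $\alpha_k=(1/2)^{h_k}$ with $h_k$ the smallest integer in $\{0,1,2,\dots\}$ such that $$f(x_k+\alpha_k d_k)\le \max_{0\le j\le \min\{k,M\}} f(x_{k-j})+\gamma\alpha_k g_k^Td_k+\eta_k .$$ Suppose the search directions satisfy, for all $k$: (1) $\mu\|g_k\|\le\|d_k\|\le\nu$ for some constants $\mu,\nu>0$; and (2) $\dfrac{d_k^Tg_k}{\|d_k\|\,\|g_k\|}\le-\epsilon$ for some $\epsilon>0$. Then $$\liminf_{k\to\infty}\|g_k\|=0 .$$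
   Context: A subgradient of $f$ at $x$ is any $g\in\mathbb{R}^n$ with $f(y)\ge f(x)+g^T(y-x)$ for all $y$; $\partial f(x)$ is the set of subgradients at $x$, and $f$ is subdifferentiable if $\partial f(x)\neq\emptyset$ everywhere. *)

theory Defs
  imports "HOL-Analysis.Analysis"
begin

definition subdiff :: "('a::real_inner \<Rightarrow> real) \<Rightarrow> 'a \<Rightarrow> 'a set" where
  "subdiff f x = {g. \<forall>y. f y \<ge> f x + g \<bullet> (y - x)}"

definition subdifferentiable :: "('a::real_inner \<Rightarrow> real) \<Rightarrow> bool" where
  "subdifferentiable f \<longleftrightarrow> (\<forall>x. subdiff f x \<noteq> {})"

end

theory Submission
  imports Defs
begin

text \<open>Suppose the gradient norms stayed above some c > 0 from some index on. The Lipschitz bound on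
subgradients makes the Armijo test succeed for all steps below a threshold proportional to c, so the
backtracked steps stay bounded away from 0 and every step lands a fixed amount below the maximum of
the last M + 1 function values, up to the error \<eta>. After subtracting the partial sums of the summable
\<eta>, the values on consecutive windows of length M + 1 therefore decrease linearly, contradicting the
lower bound on f.\<close>

lemma subdiff_Lipschitz_upper_bound:
  fixes f :: "'a::real_inner \<Rightarrow> real"
  assumes "subdifferentiable f"
    and lip: "\<And>u v gu gv. gu \<in> subdiff f u \<Longrightarrow> gv \<in> subdiff f v \<Longrightarrow>
                norm (gu - gv) \<le> L * norm (u - v)"
    and gu: "gu \<in> subdiff f u"
  shows "f v \<le> f u + gu \<bullet> (v - u) + L * (norm (v - u))\<^sup>2"
proof -
  obtain gv where gv: "gv \<in> subdiff f v"
    using assms(1) unfolding subdifferentiable_def by blast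
  have "f v + gv \<bullet> (u - v) \<le> f u"
    using gv unfolding subdiff_def by blast
  then have "f v \<le> f u + gv \<bullet> (v - u)"
    by (simp add: inner_diff_right)
  also have "\<dots> = f u + gu \<bullet> (v - u) + (gv - gu) \<bullet> (v - u)"
    by (simp add: inner_diff_left)
  also have "\<dots> \<le> f u + gu \<bullet> (v - u) + norm (gv - gu) * norm (v - u)"
    using norm_cauchy_schwarz by simp
  also have "\<dots> \<le> f u + gu \<bullet> (v - u) + L * (norm (v - u))\<^sup>2"
    using mult_right_mono[OF lip[OF gv gu], of "norm (v - u)"] by (simp add: power2_eq_square)
  finally show ?thesis .
qed

lemma inner_le_of_cosine_le:
  fixes u v :: "'a::real_inner"
  assumes cos: "(u \<bullet> v) / (norm u * norm v) \<le> - \<epsilon>" and "0 < \<epsilon>"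
  shows "u \<bullet> v \<le> - \<epsilon> * (norm u * norm v)"
proof -
  \<comment> \<open>Division by zero yields 0, so the hypothesis rules out u = 0 and v = 0.\<close>
  have "norm u * norm v \<noteq> 0"
    using assms by auto
  then have "norm u * norm v > 0"
    by (simp add: less_le)
  then show ?thesis
    using cos by (simp add: divide_le_eq)
qed

lemma armijo_condition_small_step:
  fixes f :: "'a::real_inner \<Rightarrow> real"
  assumes upper: "\<And>v. f v \<le> f u + g \<bullet> (v - u) + L * (norm (v - u))\<^sup>2"
    and descent: "g \<bullet> d \<le> - \<epsilon> * (norm d * norm g)"
    and "\<gamma> \<le> 1" "0 \<le> t"
    and small: "t * L * norm d \<le> (1 - \<gamma>) * \<epsilon> * norm g"
  shows "f (u + t *\<^sub>R d) \<le> f u + \<gamma> * t * (g \<bullet> d)"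
proof -
  have "L * (norm (t *\<^sub>R d))\<^sup>2 = (t * norm d) * (t * L * norm d)"
    using \<open>0 \<le> t\<close> by (simp add: power2_eq_square)
  also have "\<dots> \<le> (t * norm d) * ((1 - \<gamma>) * \<epsilon> * norm g)"
    using small \<open>0 \<le> t\<close> by (simp add: mult_left_mono)
  also have "\<dots> = ((1 - \<gamma>) * t) * (\<epsilon> * (norm d * norm g))"
    by (simp add: algebra_simps)
  also have "\<dots> \<le> ((1 - \<gamma>) * t) * (- (g \<bullet> d))"
    using descent \<open>\<gamma> \<le> 1\<close> \<open>0 \<le> t\<close> by (intro mult_left_mono) auto
  finally show ?thesis
    using upper[of "u + t *\<^sub>R d"] by (simp add: algebra_simps)
qed

lemma backtracking_step_ge:
  fixes \<tau> :: real
  assumes rejected: "\<And>i. i < h \<Longrightarrow> \<not> P ((1/2) ^ i)"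
    and accepted: "\<And>t. 0 < t \<Longrightarrow> t \<le> \<tau> \<Longrightarrow> P t"
  shows "min 1 (\<tau> / 2) \<le> (1/2) ^ h"
proof (cases h)
  case 0
  then show ?thesis by simp
next
  case (Suc i)
  then have "\<not> P ((1/2) ^ i)"
    using rejected by simp
  then have "\<tau> < (1/2) ^ i"
    using accepted[of "(1/2) ^ i"] by force
  then show ?thesis
    using Suc by simp
qed

lemma nonmonotone_decrease_unbounded_below:
  fixes Q :: "nat \<Rightarrow> real"
  assumes "0 < \<delta>"
    and decrease: "\<And>k. K \<le> k \<Longrightarrow> \<exists>j\<le>M. Q (Suc k) \<le> Q (k - j) - \<delta>"
  shows "\<not> bdd_below (range Q)"
proof
  define B where "B = Max (Q ` {K..K + M})"
  \<comment> \<open>Each step undercuts a value at most M + 1 indices back, so every block of M + 1 indices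
    lowers the bound by \<delta>.\<close>
  have window_bound: "Q m \<le> B - \<delta> * ((m - K) div (M + 1))" if "K \<le> m" for m
    using that
  proof (induction m rule: less_induct)
    case (less m)
    show ?case
    proof (cases "m \<le> K + M")
      case True
      then have "Q m \<le> B"
        unfolding B_def using less.prems by (intro Max_ge) auto
      moreover have "(m - K) div (M + 1) = 0"
        using True by simp
      ultimately show ?thesis by simp
    next
      case False
      then obtain k where m: "m = Suc k" and "K + M \<le> k"
        by (cases m) auto
      then obtain j where "j \<le> M" and Qm: "Q m \<le> Q (k - j) - \<delta>"
        using decrease[of k] by auto
      have "k - j < m" "K \<le> k - j"
        using \<open>j \<le> M\<close> \<open>K + M \<le> k\<close> m by auto
      then have IH: "Q (k - j) \<le> B - \<delta> * ((k - j - K) div (M + 1))"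
        by (rule less.IH)
      have "(m - K) div (M + 1) = Suc ((m - K - (M + 1)) div (M + 1))"
        using False by (simp add: le_div_geq)
      also have "\<dots> \<le> Suc ((k - j - K) div (M + 1))"
        using \<open>j \<le> M\<close> m by (simp add: div_le_mono)
      finally have "real ((m - K) div (M + 1)) \<le> (k - j - K) div (M + 1) + 1"
        by linarith
      from mult_left_mono[OF this, of \<delta>] \<open>0 < \<delta>\<close>
      have "\<delta> * ((m - K) div (M + 1)) \<le> \<delta> * ((k - j - K) div (M + 1)) + \<delta>"
        by (simp add: distrib_left)
      with Qm IH show ?thesis by linarith
    qed
  qed
  assume "bdd_below (range Q)"
  then obtain C where C: "\<And>m. C \<le> Q m"
    by (auto simp: bdd_below_def)
  obtain n :: nat where "(B - C) / \<delta> < n"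
    using reals_Archimedean2 by blast
  then have "B - \<delta> * n < C"
    using \<open>0 < \<delta>\<close> by (simp add: divide_less_eq algebra_simps)
  moreover have "(K + n * (M + 1) - K) div (M + 1) = n"
    by (metis add_diff_cancel_left' div_mult_self_is_m zero_less_Suc Suc_eq_plus1)
  then have "Q (K + n * (M + 1)) \<le> B - \<delta> * n"
    using window_bound[of "K + n * (M + 1)"] by (metis le_add1)
  ultimately show False
    using C by (metis not_le order_trans)
qed

lemma nonmonotone_perturbed_decrease_unbounded_below:
  fixes q \<eta> :: "nat \<Rightarrow> real"
  assumes "0 < \<delta>" "summable \<eta>" "\<And>k. 0 \<le> \<eta> k"
    and decrease: "\<And>k. K \<le> k \<Longrightarrow> \<exists>j\<le>M. q (Suc k) \<le> q (k - j) - \<delta> + \<eta> k"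
  shows "\<not> bdd_below (range q)"
proof
  define Q where "Q m = q m - (\<Sum>i<m. \<eta> i)" for m
  have "\<exists>j\<le>M. Q (Suc k) \<le> Q (k - j) - \<delta>" if k: "K \<le> k" for k
  proof -
    obtain j where "j \<le> M" and qj: "q (Suc k) \<le> q (k - j) - \<delta> + \<eta> k"
      using decrease[OF k] by blast
    have "(\<Sum>i<k - j. \<eta> i) \<le> (\<Sum>i<k. \<eta> i)"
      using assms(3) by (intro sum_mono2) auto
    then have "Q (Suc k) \<le> Q (k - j) - \<delta>"
      using qj unfolding Q_def by simp
    with \<open>j \<le> M\<close> show ?thesis by blast
  qed
  then have unbounded: "\<not> bdd_below (range Q)"
    using nonmonotone_decrease_unbounded_below \<open>0 < \<delta>\<close> by blast
  assume "bdd_below (range q)"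
  then obtain C where C: "\<And>m. C \<le> q m"
    by (auto simp: bdd_below_def)
  have partial_sums: "(\<Sum>i<m. \<eta> i) \<le> suminf \<eta>" for m
    using sum_le_suminf[OF assms(2), of "{..<m}"] assms(3) by simp
  have "C - suminf \<eta> \<le> Q m" for m
    using C[of m] partial_sums[of m] unfolding Q_def by linarith
  with unbounded show False
    by (auto simp: bdd_below_def)
qed

lemma liminf_ereal_eq_0I:
  fixes u :: "nat \<Rightarrow> real"
  assumes "\<And>k. 0 \<le> u k" and small: "\<And>c. 0 < c \<Longrightarrow> \<exists>\<^sub>F k in sequentially. u k < c"
  shows "liminf (\<lambda>k. ereal (u k)) = 0"
proof (rule antisym)
  show "liminf (\<lambda>k. ereal (u k)) \<le> 0"
  proof (rule ereal_le_epsilon2)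
    fix c :: real
    assume "0 < c"
    show "liminf (\<lambda>k. ereal (u k)) \<le> 0 + ereal c"
    proof (rule ccontr)
      assume "\<not> ?thesis"
      then have "ereal c < liminf (\<lambda>k. ereal (u k))"
        by simp
      then have "\<forall>\<^sub>F k in sequentially. c < u k"
        by (auto dest: less_LiminfD)
      then have "\<forall>\<^sub>F k in sequentially. \<not> u k < c"
        by (rule eventually_mono) simp
      with small[OF \<open>0 < c\<close>] show False
        by (simp add: frequently_def)
    qed
  qed
  show "0 \<le> liminf (\<lambda>k. ereal (u k))"
    using assms(1) by (intro Liminf_bounded) auto
qed

locale nonmonotone_line_search =
  fixes f :: "'a::real_inner \<Rightarrow> real"
    and L \<gamma> \<mu> \<nu> \<epsilon> :: real
    and M :: nat
    and \<eta> :: "nat \<Rightarrow> real"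
    and x g d :: "nat \<Rightarrow> 'a"
    and h :: "nat \<Rightarrow> nat"
  assumes subdifferentiable: "subdifferentiable f"
    and L_pos: "L > 0"
    and lip: "\<And>u v gu gv. gu \<in> subdiff f u \<Longrightarrow> gv \<in> subdiff f v \<Longrightarrow>
                 norm (gu - gv) \<le> L * norm (u - v)"
    and gamma: "0 < \<gamma>" "\<gamma> < 1"
    and eta_nonneg: "\<And>k. 0 \<le> \<eta> k"
    and eta_summable: "summable \<eta>"
    and g_sub: "\<And>k. g k \<in> subdiff f (x k)"
    and step: "\<And>k. x (Suc k) = x k + ((1/2) ^ h k) *\<^sub>R d k"
    and armijo_holds: "\<And>k. f (x k + ((1/2) ^ h k) *\<^sub>R d k)
          \<le> Max ((\<lambda>j. f (x (k - j))) ` {0..min k M}) + \<gamma> * (1/2) ^ h k * (g k \<bullet> d k) + \<eta> k"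
    and armijo_least: "\<And>k i. i < h k \<Longrightarrow> \<not> (f (x k + ((1/2) ^ i) *\<^sub>R d k)
          \<le> Max ((\<lambda>j. f (x (k - j))) ` {0..min k M}) + \<gamma> * (1/2) ^ i * (g k \<bullet> d k) + \<eta> k)"
    and mu_pos: "\<mu> > 0"
    and nu_pos: "\<nu> > 0"
    and dir_bounds: "\<And>k. \<mu> * norm (g k) \<le> norm (d k) \<and> norm (d k) \<le> \<nu>"
    and eps_pos: "\<epsilon> > 0"
    and angle: "\<And>k. (d k \<bullet> g k) / (norm (d k) * norm (g k)) \<le> - \<epsilon>"
begin

abbreviation reference_value :: "nat \<Rightarrow> real" where
  "reference_value k \<equiv> Max ((\<lambda>j. f (x (k - j))) ` {0..min k M})"

lemma reference_value_ge: "f (x k) \<le> reference_value k"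
  by (rule Max_ge) (auto intro!: image_eqI[where x = 0])

lemma reference_value_attained:
  obtains j where "j \<le> M" "reference_value k = f (x (k - j))"
proof -
  have "reference_value k \<in> (\<lambda>j. f (x (k - j))) ` {0..min k M}"
    by (rule Max_in) auto
  then obtain j where "j \<in> {0..min k M}" "reference_value k = f (x (k - j))"
    by blast
  with that[of j] show ?thesis by simp
qed

lemma descent_direction: "g k \<bullet> d k \<le> - \<epsilon> * (norm (d k) * norm (g k))"
  using inner_le_of_cosine_le[OF angle eps_pos] by (simp add: inner_commute)

lemma step_size_ge:
  assumes "c \<le> norm (g k)"
  shows "min 1 ((1 - \<gamma>) * \<epsilon> * c / (2 * L * \<nu>)) \<le> (1/2) ^ h k"
proof -
  have "f (x k + t *\<^sub>R d k) \<le> reference_value k + \<gamma> * t * (g k \<bullet> d k) + \<eta> k"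
    if "0 < t" "t \<le> (1 - \<gamma>) * \<epsilon> * c / (L * \<nu>)" for t
  proof -
    have "t * L * norm (d k) \<le> t * L * \<nu>"
      using dir_bounds[of k] L_pos \<open>0 < t\<close> by simp
    also have "\<dots> \<le> (1 - \<gamma>) * \<epsilon> * c"
      using that L_pos nu_pos by (simp add: pos_le_divide_eq mult.commute mult.left_commute)
    also have "\<dots> \<le> (1 - \<gamma>) * \<epsilon> * norm (g k)"
      using assms gamma eps_pos by simp
    finally have small: "t * L * norm (d k) \<le> (1 - \<gamma>) * \<epsilon> * norm (g k)" .
    have "f (x k + t *\<^sub>R d k) \<le> f (x k) + \<gamma> * t * (g k \<bullet> d k)"
      using gamma \<open>0 < t\<close>
      by (intro armijo_condition_small_step[OF subdiff_Lipschitz_upper_bound[OF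
            subdifferentiable lip g_sub] descent_direction _ _ small]) auto
    then show ?thesis
      using reference_value_ge[of k] eta_nonneg[of k] by linarith
  qed
  then have "min 1 ((1 - \<gamma>) * \<epsilon> * c / (L * \<nu>) / 2) \<le> (1/2) ^ h k"
    by (intro backtracking_step_ge[where
          P = "\<lambda>t. f (x k + t *\<^sub>R d k) \<le> reference_value k + \<gamma> * t * (g k \<bullet> d k) + \<eta> k"]
        armijo_least)
  then show ?thesis
    by (simp add: mult.commute mult.left_commute)
qed

lemma sufficient_decrease:
  assumes "0 \<le> c" "c \<le> norm (g k)" "0 \<le> a" "a \<le> (1/2) ^ h k"
  obtains j where "j \<le> M" "f (x (Suc k)) \<le> f (x (k - j)) - \<gamma> * a * \<epsilon> * \<mu> * c\<^sup>2 + \<eta> k"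
proof -
  have "\<mu> * c\<^sup>2 \<le> norm (d k) * norm (g k)"
  proof -
    have "\<mu> * c \<le> norm (d k)"
      using assms(2) dir_bounds[of k] mu_pos by (meson mult_left_mono order_trans less_imp_le)
    then show ?thesis
      using assms(1,2) mu_pos by (simp add: power2_eq_square mult.assoc[symmetric] mult_mono)
  qed
  then have "\<epsilon> * (\<mu> * c\<^sup>2) \<le> \<epsilon> * (norm (d k) * norm (g k))"
    using eps_pos by simp
  then have "a * (\<epsilon> * (\<mu> * c\<^sup>2)) \<le> (1/2) ^ h k * (\<epsilon> * (norm (d k) * norm (g k)))"
    using mult_mono[OF assms(4)] eps_pos mu_pos by simp
  also have "\<dots> \<le> (1/2) ^ h k * (- (g k \<bullet> d k))"
    using descent_direction[of k] by (intro mult_left_mono) auto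
  finally have "\<gamma> * (a * (\<epsilon> * (\<mu> * c\<^sup>2))) \<le> \<gamma> * ((1/2) ^ h k * (- (g k \<bullet> d k)))"
    by (rule mult_left_mono) (use gamma in simp)
  then have "\<gamma> * (1/2) ^ h k * (g k \<bullet> d k) \<le> - \<gamma> * a * \<epsilon> * \<mu> * c\<^sup>2"
    by (simp add: algebra_simps)
  moreover obtain j where "j \<le> M" "reference_value k = f (x (k - j))"
    by (rule reference_value_attained)
  ultimately show ?thesis
    using that armijo_holds[of k] step[of k] by fastforce
qed

lemma frequently_small_gradient:
  assumes "bdd_below (range (\<lambda>k. f (x k)))" and "0 < c"
  shows "\<exists>\<^sub>F k in sequentially. norm (g k) < c"
proof (rule ccontr)
  assume "\<not> ?thesis"
  then obtain K where K: "\<And>k. K \<le> k \<Longrightarrow> c \<le> norm (g k)"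
    by (auto simp: not_frequently eventually_sequentially not_less)
  define a where "a = min 1 ((1 - \<gamma>) * \<epsilon> * c / (2 * L * \<nu>))"
  have "0 < a"
    unfolding a_def using gamma eps_pos \<open>0 < c\<close> L_pos nu_pos by simp
  have "\<exists>j\<le>M. f (x (Suc k)) \<le> f (x (k - j)) - \<gamma> * a * \<epsilon> * \<mu> * c\<^sup>2 + \<eta> k"
    if "K \<le> k" for k
    using sufficient_decrease[of c k a] step_size_ge[of c k] K[OF that] \<open>0 < a\<close> \<open>0 < c\<close>
    unfolding a_def by (metis less_imp_le)
  moreover have "0 < \<gamma> * a * \<epsilon> * \<mu> * c\<^sup>2"
    using gamma \<open>0 < a\<close> eps_pos mu_pos \<open>0 < c\<close> by simp
  ultimately have "\<not> bdd_below (range (\<lambda>k. f (x k)))"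
    using eta_summable eta_nonneg by (intro nonmonotone_perturbed_decrease_unbounded_below) auto
  with assms(1) show False by blast
qed

lemma liminf_norm_gradient_eq_0:
  assumes "bdd_below (range (\<lambda>k. f (x k)))"
  shows "liminf (\<lambda>k. ereal (norm (g k))) = 0"
  using frequently_small_gradient[OF assms] by (intro liminf_ereal_eq_0I) auto

end

theorem mainTheorem4:
  fixes f :: "real ^ 'n \<Rightarrow> real"
    and L C \<gamma> \<mu> \<nu> \<epsilon> :: real
    and M :: nat
    and \<eta> :: "nat \<Rightarrow> real"
    and x0 :: "real ^ 'n"
    and x g d :: "nat \<Rightarrow> real ^ 'n"
    and h :: "nat \<Rightarrow> nat"
  assumes subdiffble: "subdifferentiable f"
    and L_pos: "L > 0"
    and lip: "\<And>u v gu gv. gu \<in> subdiff f u \<Longrightarrow> gv \<in> subdiff f v \<Longrightarrow>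
                 norm (gu - gv) \<le> L * norm (u - v)"
    and cpt: "compact {y. f y \<le> f x0}"
    and lower: "\<And>y. y \<in> {y. f y \<le> f x0} \<Longrightarrow> f y \<ge> C"
    and gamma: "0 < \<gamma>" "\<gamma> < 1"
    and eta_pos: "\<And>k. \<eta> k > 0"
    and eta_sum: "summable \<eta>"
    and x_init: "x 0 = x0"
    and g_sub: "\<And>k. g k \<in> subdiff f (x k)"
    and step: "\<And>k. x (Suc k) = x k + ((1/2) ^ h k) *\<^sub>R d k"
    and armijo_holds: "\<And>k. f (x k + ((1/2) ^ h k) *\<^sub>R d k)
          \<le> Max ((\<lambda>j. f (x (k - j))) ` {0..min k M}) + \<gamma> * (1/2) ^ h k * (g k \<bullet> d k) + \<eta> k"
    and armijo_least: "\<And>k i. i < h k \<Longrightarrow> \<not> (f (x k + ((1/2) ^ i) *\<^sub>R d k)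
          \<le> Max ((\<lambda>j. f (x (k - j))) ` {0..min k M}) + \<gamma> * (1/2) ^ i * (g k \<bullet> d k) + \<eta> k)"
    and mu_nu: "\<mu> > 0" "\<nu> > 0"
    and dir_bounds: "\<And>k. \<mu> * norm (g k) \<le> norm (d k) \<and> norm (d k) \<le> \<nu>"
    and eps_pos: "\<epsilon> > 0"
    and angle: "\<And>k. (d k \<bullet> g k) / (norm (d k) * norm (g k)) \<le> - \<epsilon>"
  shows "liminf (\<lambda>k. ereal (norm (g k))) = 0"
proof -
  interpret nonmonotone_line_search f L \<gamma> \<mu> \<nu> \<epsilon> M \<eta> x g d h
    using subdiffble L_pos lip gamma eta_pos eta_sum g_sub step armijo_holds armijo_least
      mu_nu dir_bounds eps_pos angle
    by unfold_locales (auto intro: less_imp_le)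
  have "C \<le> f y" for y
    using lower[of y] lower[of x0] by (cases "f y \<le> f x0") auto
  then have "bdd_below (range (\<lambda>k. f (x k)))"
    by (metis bdd_belowI2)
  then show ?thesis
    by (rule liminf_norm_gradient_eq_0)
qed

end
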